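(* Let $1\le k\le n$. If $A\in H_n^k$ and $A=\pi U_{n,k}\sigma=\rho U_{n,k}\tau$ with $\pi,\sigma,\rho,\tau\in S_n$, then $\pi\sigma=\rho\tau$; hence $T_{n,k}:H_n^k\to S_n$, $T_{n,k}(\pi U_{n,k}\sigma)=\pi\sigma$, is well defined. Moreover $T_{n,k}$ preserves the action of $S_n\times S_n$, i.e. $$T_{n,k}(\pi A\sigma)=\pi\, T_{n,k}(A)\,\sigma\quad\text{for all }A\in H_n^k,\ \pi,\sigma\in S_n.$$
   Context: Permutations are composed as functions, and $\pi\in S_n$ is identified with the $n\times n$ permutation matrix whose $(i,j)$ entry is $1$ iff $i=\pi(j)$. $U_{n,k}$ is the $n\times n$ $(0,1)$-matrix whose upper left $k\times k$ block is upper triangular with all entries on and above the diagonal equal to $1$, whose upper right $k\times(n-k)$ block has all entries $1$, whose lower left $(n-k)\times k$ block is zero, and whose lower right block is $I_{n-k}$. $H_n^k=\{\pi U_{n,k}\sigma\mid \pi,\sigma\in S_n\}\subseteq GL_n(\mathbb{Z}_2)$. *)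

theory Defs
  imports "Jordan_Normal_Form.Matrix" "HOL-Library.Z2" "HOL-Combinatorics.Permutations"
begin

text \<open>Matrices over Z_2 are n x n matrices of type bit mat; indices are 0..n-1.
  A permutation of {0..n-1} is a function p with p permutes {..<n}.\<close>

definition perm_mat :: "nat \<Rightarrow> (nat \<Rightarrow> nat) \<Rightarrow> bit mat" where
  "perm_mat n p = mat n n (\<lambda>(i, j). if i = p j then 1 else 0)"

definition U_mat :: "nat \<Rightarrow> nat \<Rightarrow> bit mat" where
  "U_mat n k = mat n n (\<lambda>(i, j).
     if i < k \<and> j < k then (if i \<le> j then 1 else 0)
     else if i < k \<and> k \<le> j then 1
     else if k \<le> i \<and> j < k then 0
     else (if i = j then 1 else 0))"

definition H_set :: "nat \<Rightarrow> nat \<Rightarrow> bit mat set" where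
  "H_set n k = {perm_mat n p * U_mat n k * perm_mat n s | p s.
                  p permutes {..<n} \<and> s permutes {..<n}}"

definition T_map :: "nat \<Rightarrow> nat \<Rightarrow> bit mat \<Rightarrow> (nat \<Rightarrow> nat)" where
  "T_map n k A = (THE t. \<exists>p s. p permutes {..<n} \<and> s permutes {..<n} \<and>
                      A = perm_mat n p * U_mat n k * perm_mat n s \<and> t = p \<circ> s)"

end

theory Submission
  imports Defs
begin

text \<open>Multiplying by permutation matrices only relabels rows and columns:
  (P_p M P_s)(i, j) = M(p^-1 i, s j). Hence P_p U P_s = P_r U P_t says that a = r^-1 p and
  b = t s^-1 map the support of U onto itself. Such a pair preserves the number of ones in every
  row and column; since row x < k of U contains n - x ones and column y < k contains y + 1 ones,
  both a and b fix every index below k, and for x >= k the diagonal entry is the only one in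
  row x, which forces a x = b x. So a = b, that is p s = r t, which makes T well defined;
  equivariance then follows from P_p P_q = P_(p q). The argument works for every k.\<close>

unbundle no m_inv_syntax \<comment> \<open>HOL-Algebra's group inverse would otherwise capture inv\<close>

lemma perm_mat_carrier [simp]: "perm_mat n p \<in> carrier_mat n n"
  by (simp add: perm_mat_def)

lemma U_mat_carrier [simp]: "U_mat n k \<in> carrier_mat n n"
  by (simp add: U_mat_def)

lemma permutes_lessThan_in: "p permutes {..<n} \<Longrightarrow> i < n \<Longrightarrow> p i < n"
  using permutes_in_image[of p "{..<n}" i] by simp

lemma permutes_lessThan_inv_in: "p permutes {..<n} \<Longrightarrow> i < n \<Longrightarrow> inv p i < n"
  using permutes_lessThan_in[OF permutes_inv] .

lemma perm_mat_mult_eq: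
  assumes p: "p permutes {..<n}" and M: "M \<in> carrier_mat n n"
  shows "perm_mat n p * M = mat n n (\<lambda>(i, j). M $$ (inv p i, j))"
proof (rule eq_matI)
  fix i j assume "i < dim_row (mat n n (\<lambda>(i, j). M $$ (inv p i, j)))"
    and "j < dim_col (mat n n (\<lambda>(i, j). M $$ (inv p i, j)))"
  then have i: "i < n" and j: "j < n" by auto
  have "(perm_mat n p * M) $$ (i, j) = (\<Sum>l<n. (if i = p l then 1 else 0) * M $$ (l, j))"
    using i j M by (simp add: perm_mat_def scalar_prod_def atLeast0LessThan)
  also have "\<dots> = (\<Sum>l<n. if l = inv p i then M $$ (l, j) else 0)"
    by (intro sum.cong refl) (auto simp: permutes_inverses[OF p])
  also have "\<dots> = M $$ (inv p i, j)"
    using permutes_lessThan_inv_in[OF p i] by simp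
  finally show "(perm_mat n p * M) $$ (i, j) = mat n n (\<lambda>(i, j). M $$ (inv p i, j)) $$ (i, j)"
    using i j by simp
qed (use M in \<open>auto simp: perm_mat_def\<close>)

lemma mult_perm_mat_eq:
  assumes p: "p permutes {..<n}" and M: "M \<in> carrier_mat n n"
  shows "M * perm_mat n p = mat n n (\<lambda>(i, j). M $$ (i, p j))"
proof (rule eq_matI)
  fix i j assume "i < dim_row (mat n n (\<lambda>(i, j). M $$ (i, p j)))"
    and "j < dim_col (mat n n (\<lambda>(i, j). M $$ (i, p j)))"
  then have i: "i < n" and j: "j < n" by auto
  have "(M * perm_mat n p) $$ (i, j) = (\<Sum>l<n. M $$ (i, l) * (if l = p j then 1 else 0))"
    using i j M by (simp add: perm_mat_def scalar_prod_def atLeast0LessThan)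
  also have "\<dots> = M $$ (i, p j)"
    using permutes_lessThan_in[OF p j] by (simp add: if_distrib cong: if_cong)
  finally show "(M * perm_mat n p) $$ (i, j) = mat n n (\<lambda>(i, j). M $$ (i, p j)) $$ (i, j)"
    using i j by simp
qed (use M in \<open>auto simp: perm_mat_def\<close>)

lemma perm_mat_mult_perm_mat:
  assumes p: "p permutes {..<n}" and q: "q permutes {..<n}"
  shows "perm_mat n p * perm_mat n q = perm_mat n (p \<circ> q)"
  unfolding perm_mat_mult_eq[OF p perm_mat_carrier]
  by (rule eq_matI) (auto simp: perm_mat_def permutes_lessThan_inv_in[OF p] permutes_inv_eq[OF p])

lemma index_perm_mat_mult_mult_perm_mat:
  assumes "p permutes {..<n}" and "s permutes {..<n}" and "M \<in> carrier_mat n n"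
    and "i < n" and "j < n"
  shows "(perm_mat n p * M * perm_mat n s) $$ (i, j) = M $$ (inv p i, s j)"
  using assms by (simp add: perm_mat_mult_eq mult_perm_mat_eq permutes_lessThan_in)

lemma perm_mat_mult_sandwich:
  assumes M: "M \<in> carrier_mat n n"
    and "p permutes {..<n}" and "q permutes {..<n}" and "r permutes {..<n}" and "s permutes {..<n}"
  shows "perm_mat n p * (perm_mat n q * M * perm_mat n r) * perm_mat n s
       = perm_mat n (p \<circ> q) * M * perm_mat n (r \<circ> s)"
proof -
  let ?P = "perm_mat n p" and ?Q = "perm_mat n q" and ?R = "perm_mat n r" and ?S = "perm_mat n s"
  have QM: "?Q * M \<in> carrier_mat n n" and PQM: "?P * ?Q * M \<in> carrier_mat n n"
    using M by (metis mult_carrier_mat perm_mat_carrier)+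
  have "?P * (?Q * M * ?R) * ?S = ?P * (?Q * M) * ?R * ?S"
    using assoc_mult_mat[OF perm_mat_carrier QM perm_mat_carrier] by simp
  also have "\<dots> = ?P * ?Q * M * (?R * ?S)"
    using assoc_mult_mat[OF perm_mat_carrier perm_mat_carrier M]
      assoc_mult_mat[OF PQM perm_mat_carrier perm_mat_carrier] by simp
  finally show ?thesis
    using assms by (simp add: perm_mat_mult_perm_mat)
qed

lemma perm_mat_sandwich_eq_imp_index_eq:
  assumes M: "M \<in> carrier_mat n n"
    and p: "p permutes {..<n}" and s: "s permutes {..<n}"
    and r: "r permutes {..<n}" and t: "t permutes {..<n}"
    and eq: "perm_mat n p * M * perm_mat n s = perm_mat n r * M * perm_mat n t"
    and x: "x < n" and y: "y < n"
  shows "M $$ (x, y) = M $$ ((inv r \<circ> p) x, (t \<circ> inv s) y)"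
proof -
  have i: "p x < n" and j: "inv s y < n"
    using permutes_lessThan_in[OF p x] permutes_lessThan_inv_in[OF s y] .
  have "M $$ (x, y) = (perm_mat n p * M * perm_mat n s) $$ (p x, inv s y)"
    using index_perm_mat_mult_mult_perm_mat[OF p s M i j]
    by (simp add: permutes_inverses[OF p] permutes_inverses[OF s])
  also have "\<dots> = M $$ ((inv r \<circ> p) x, (t \<circ> inv s) y)"
    using index_perm_mat_mult_mult_perm_mat[OF r t M i j] by (simp add: eq)
  finally show ?thesis .
qed

lemma card_relation_row_eq:
  assumes b: "bij_betw b S S" and pres: "\<forall>x\<in>S. \<forall>y\<in>S. R x y \<longleftrightarrow> R (a x) (b y)"
    and x: "x \<in> S"
  shows "card {y \<in> S. R (a x) y} = card {y \<in> S. R x y}"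
proof -
  have "{y \<in> S. R (a x) y} = b ` {y \<in> S. R x y}"
  proof (intro equalityI subsetI)
    fix z assume z: "z \<in> {y \<in> S. R (a x) y}"
    then obtain y where "y \<in> S" and "z = b y"
      using b by (auto simp: bij_betw_def)
    then show "z \<in> b ` {y \<in> S. R x y}"
      using z pres x by auto
  qed (use b pres x in \<open>auto simp: bij_betw_def\<close>)
  moreover have "inj_on b {y \<in> S. R x y}"
    using b by (auto simp: bij_betw_def intro: inj_on_subset)
  ultimately show ?thesis
    by (simp add: card_image)
qed

definition U_pattern :: "nat \<Rightarrow> nat \<Rightarrow> nat \<Rightarrow> bool" where
  "U_pattern k x y \<longleftrightarrow> (x < k \<and> x \<le> y) \<or> x = y"

lemma index_U_mat:
  "x < n \<Longrightarrow> y < n \<Longrightarrow> U_mat n k $$ (x, y) = (if U_pattern k x y then 1 else 0)"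
  by (auto simp: U_mat_def U_pattern_def)

lemma card_U_pattern_row:
  assumes "x < n"
  shows "card {y \<in> {..<n}. U_pattern k x y} = (if x < k then n - x else 1)"
proof -
  have "{y \<in> {..<n}. U_pattern k x y} = (if x < k then {x..<n} else {x})"
    using assms by (auto simp: U_pattern_def)
  then show ?thesis by simp
qed

lemma card_U_pattern_col:
  assumes "y < n"
  shows "card {x \<in> {..<n}. U_pattern k x y} = (if y < k then y + 1 else k + 1)"
proof -
  have "{x \<in> {..<n}. U_pattern k x y} = (if y < k then {..y} else insert y {..<k})"
    using assms by (auto simp: U_pattern_def)
  then show ?thesis by simp
qed

lemma U_pattern_preserving_perms_eq:
  assumes a: "a permutes {..<n}" and b: "b permutes {..<n}"
    and pres: "\<forall>x\<in>{..<n}. \<forall>y\<in>{..<n}. U_pattern k x y \<longleftrightarrow> U_pattern k (a x) (b y)"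
  shows "a = b"
proof -
  have a_fix: "a x = x" if "x < k" and "x < n" for x
  proof -
    have "a x < n"
      using permutes_lessThan_in[OF a \<open>x < n\<close>] .
    have "(if a x < k then n - a x else 1) = (if x < k then n - x else 1)"
      using card_relation_row_eq[OF permutes_imp_bij[OF b] pres, of x] \<open>x < n\<close>
      unfolding card_U_pattern_row[OF \<open>a x < n\<close>] card_U_pattern_row[OF \<open>x < n\<close>] by simp
    then show ?thesis
      using that \<open>a x < n\<close> by (auto split: if_splits)
  qed
  have b_fix: "b y = y" if "y < k" and "y < n" for y
  proof -
    have "b y < n"
      using permutes_lessThan_in[OF b \<open>y < n\<close>] .
    have "\<forall>y\<in>{..<n}. \<forall>x\<in>{..<n}. U_pattern k x y \<longleftrightarrow> U_pattern k (a x) (b y)"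
      using pres by blast
    then have "(if b y < k then b y + 1 else k + 1) = (if y < k then y + 1 else k + 1)"
      using card_relation_row_eq[OF permutes_imp_bij[OF a], of "\<lambda>y x. U_pattern k x y" b y]
        \<open>y < n\<close>
      unfolding card_U_pattern_col[OF \<open>b y < n\<close>] card_U_pattern_col[OF \<open>y < n\<close>] by simp
    then show ?thesis
      using that by (auto split: if_splits)
  qed
  show ?thesis
  proof
    fix x
    consider "x \<ge> n" | "x < n" "x < k" | "x < n" "x \<ge> k"
      by linarith
    then show "a x = b x"
    proof cases
      case 1
      then show ?thesis
        using a b by (simp add: permutes_def)
    next
      case 2
      then show ?thesis
        using a_fix b_fix by simp
    next
      case 3
      have "\<not> a x < k"
      proof
        assume "a x < k"
        then have "a (a x) = a x"
          using a_fix permutes_lessThan_in[OF a \<open>x < n\<close>] by blast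
        then have "a x = x"
          using permutes_inj[OF a] by (simp add: inj_eq)
        with \<open>a x < k\<close> 3 show False
          by simp
      qed
      moreover have "U_pattern k (a x) (b x)"
        using pres 3 by (auto simp: U_pattern_def)
      ultimately show ?thesis
        by (simp add: U_pattern_def)
    qed
  qed
qed

lemma perm_U_perm_eq_imp_comp_eq:
  assumes p: "p permutes {..<n}" and s: "s permutes {..<n}"
    and r: "r permutes {..<n}" and t: "t permutes {..<n}"
    and eq: "perm_mat n p * U_mat n k * perm_mat n s = perm_mat n r * U_mat n k * perm_mat n t"
  shows "p \<circ> s = r \<circ> t"
proof -
  have "U_pattern k x y \<longleftrightarrow> U_pattern k ((inv r \<circ> p) x) ((t \<circ> inv s) y)"
    if "x < n" and "y < n" for x y
  proof -
    have "(inv r \<circ> p) x < n" and "(t \<circ> inv s) y < n"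
      using that by (simp_all add: permutes_lessThan_in permutes_lessThan_inv_in p r s t)
    then show ?thesis
      using perm_mat_sandwich_eq_imp_index_eq[OF U_mat_carrier p s r t eq that] that
      by (auto simp: index_U_mat simp del: comp_apply split: if_splits)
  qed
  then have "inv r \<circ> p = t \<circ> inv s"
    using U_pattern_preserving_perms_eq[OF permutes_compose[OF p permutes_inv[OF r]]
        permutes_compose[OF permutes_inv[OF s] t]] by blast
  have "p \<circ> s = r \<circ> (inv r \<circ> p) \<circ> s"
    by (simp add: o_assoc permutes_inv_o[OF r])
  also have "\<dots> = r \<circ> (t \<circ> inv s) \<circ> s"
    using \<open>inv r \<circ> p = t \<circ> inv s\<close> by simp
  also have "\<dots> = r \<circ> t"
    by (simp add: comp_assoc permutes_inv_o[OF s])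
  finally show ?thesis .
qed

lemma T_map_perm_U_perm:
  assumes "p permutes {..<n}" and "s permutes {..<n}"
  shows "T_map n k (perm_mat n p * U_mat n k * perm_mat n s) = p \<circ> s"
  unfolding T_map_def
proof (rule the_equality)
  show "\<exists>p' s'. p' permutes {..<n} \<and> s' permutes {..<n} \<and>
      perm_mat n p * U_mat n k * perm_mat n s = perm_mat n p' * U_mat n k * perm_mat n s' \<and>
      p \<circ> s = p' \<circ> s'"
    using assms by blast
next
  fix c
  assume "\<exists>p' s'. p' permutes {..<n} \<and> s' permutes {..<n} \<and>
      perm_mat n p * U_mat n k * perm_mat n s = perm_mat n p' * U_mat n k * perm_mat n s' \<and>
      c = p' \<circ> s'"
  then show "c = p \<circ> s"
    using perm_U_perm_eq_imp_comp_eq[OF assms] by metis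
qed

lemma T_map_perm_mult_mult_perm:
  assumes A: "A \<in> H_set n k" and p: "p permutes {..<n}" and s: "s permutes {..<n}"
  shows "T_map n k (perm_mat n p * A * perm_mat n s) = p \<circ> T_map n k A \<circ> s"
proof -
  obtain q r where q: "q permutes {..<n}" and r: "r permutes {..<n}"
    and A_eq: "A = perm_mat n q * U_mat n k * perm_mat n r"
    using A unfolding H_set_def by blast
  have "T_map n k (perm_mat n p * A * perm_mat n s)
      = T_map n k (perm_mat n (p \<circ> q) * U_mat n k * perm_mat n (r \<circ> s))"
    unfolding A_eq by (simp add: perm_mat_mult_sandwich p q r s)
  also have "\<dots> = p \<circ> (q \<circ> r) \<circ> s"
    by (simp add: T_map_perm_U_perm permutes_compose p q r s comp_assoc)
  also have "\<dots> = p \<circ> T_map n k A \<circ> s"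
    by (simp add: A_eq T_map_perm_U_perm q r)
  finally show ?thesis .
qed

theorem mainTheorem3:
  fixes n k :: nat
  assumes "1 \<le> k" and "k \<le> n"
  shows "(\<forall>p s r t. p permutes {..<n} \<and> s permutes {..<n} \<and>
              r permutes {..<n} \<and> t permutes {..<n} \<and>
              perm_mat n p * U_mat n k * perm_mat n s = perm_mat n r * U_mat n k * perm_mat n t
              \<longrightarrow> p \<circ> s = r \<circ> t)
       \<and> (\<forall>A \<in> H_set n k. \<forall>p s. p permutes {..<n} \<and> s permutes {..<n} \<longrightarrow>
              T_map n k (perm_mat n p * A * perm_mat n s) = p \<circ> T_map n k A \<circ> s)"
  using perm_U_perm_eq_imp_comp_eq T_map_perm_mult_mult_perm by blast

end
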